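(* Let $A$ (in $\mathcal H$) and $B$ (in $\mathcal K$) be closed densely defined operators with $A\dashv B$ via a bounded intertwining operator $T$. Assume that $D(B)\subseteq D(T^{-1})$ and $R(B)\subseteq D(T^{-1})$, where $D(T^{-1})=R(T)$. Then $\rho(A)\setminus\sigma_p(B)\subseteq\rho(B)\cup\sigma_c(B)$.
   Context: A bounded operator $T:\mathcal H\to\mathcal K$ is a bounded intertwining operator for $A$ and $B$ if $T D(A)\subseteq D(B)$ and $BT\xi=TA\xi$ for all $\xi\in D(A)$. $A\dashv B$ (quasi-similarity) means there is a bounded intertwining operator $T$ for $A$ and $B$ that is injective with densely defined inverse $T^{-1}$. Spectral notions: $\rho(A)$ = set of $\lambda$ with $A-\lambda I$ injective and $(A-\lambda I)^{-1}$ bounded everywhere defined; $\sigma_p$ = set of eigenvalues; $\sigma_c(B)$ = set of $\lambda$ with $B-\lambda I$ injective with dense range different from $\mathcal K$. *)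

theory Defs
  imports "HOL-Analysis.Analysis"
begin

class complex_hilbert = real_normed_vector + complete_space +
  fixes scaleC :: "complex \<Rightarrow> 'a \<Rightarrow> 'a"
    and cinner :: "'a \<Rightarrow> 'a \<Rightarrow> complex"
  assumes scaleC_add_left: "scaleC (a + b) x = scaleC a x + scaleC b x"
    and scaleC_add_right: "scaleC a (x + y) = scaleC a x + scaleC a y"
    and scaleC_scaleC: "scaleC a (scaleC b x) = scaleC (a * b) x"
    and scaleC_one: "scaleC 1 x = x"
    and scaleR_scaleC: "scaleR r x = scaleC (complex_of_real r) x"
    and cinner_commute: "cinner x y = cnj (cinner y x)"
    and cinner_add_left: "cinner (x + y) z = cinner x z + cinner y z"
    and cinner_scaleC_left: "cinner (scaleC c x) y = cnj c * cinner x y"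
    and cinner_nonneg: "Im (cinner x x) = 0 \<and> Re (cinner x x) \<ge> 0"
    and cinner_eq_zero: "cinner x x = 0 \<longleftrightarrow> x = 0"
    and norm_cinner: "norm x = sqrt (Re (cinner x x))"

text \<open>An (unbounded) linear operator is given by its domain D and its action f on D.\<close>

definition csubspace :: "'a::complex_hilbert set \<Rightarrow> bool" where
  "csubspace D \<longleftrightarrow> 0 \<in> D \<and> (\<forall>x\<in>D. \<forall>y\<in>D. x + y \<in> D) \<and> (\<forall>c. \<forall>x\<in>D. scaleC c x \<in> D)"

definition lin_op :: "'a::complex_hilbert set \<Rightarrow> ('a \<Rightarrow> 'b::complex_hilbert) \<Rightarrow> bool" where
  "lin_op D f \<longleftrightarrow> csubspace D \<and> (\<forall>x\<in>D. \<forall>y\<in>D. f (x + y) = f x + f y)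
      \<and> (\<forall>c. \<forall>x\<in>D. f (scaleC c x) = scaleC c (f x))"

definition graph :: "'a set \<Rightarrow> ('a \<Rightarrow> 'b) \<Rightarrow> ('a \<times> 'b) set" where
  "graph D f = {(x, f x) | x. x \<in> D}"

definition closed_op :: "'a::complex_hilbert set \<Rightarrow> ('a \<Rightarrow> 'b::complex_hilbert) \<Rightarrow> bool" where
  "closed_op D f \<longleftrightarrow> lin_op D f \<and> closed (graph D f)"

definition densely_defined :: "'a::complex_hilbert set \<Rightarrow> bool" where
  "densely_defined D \<longleftrightarrow> closure D = UNIV"

definition cbounded_linear :: "('a::complex_hilbert \<Rightarrow> 'b::complex_hilbert) \<Rightarrow> bool" where
  "cbounded_linear T \<longleftrightarrow> bounded_linear T \<and> (\<forall>c x. T (scaleC c x) = scaleC c (T x))"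

definition intertwining :: "('a::complex_hilbert \<Rightarrow> 'b::complex_hilbert) \<Rightarrow> 'a set \<Rightarrow> ('a \<Rightarrow> 'a)
    \<Rightarrow> 'b set \<Rightarrow> ('b \<Rightarrow> 'b) \<Rightarrow> bool" where
  "intertwining T DA fA DB fB \<longleftrightarrow> cbounded_linear T \<and> T ` DA \<subseteq> DB
      \<and> (\<forall>\<xi>\<in>DA. fB (T \<xi>) = T (fA \<xi>))"

text \<open>A \<dashv> B via T: T bounded intertwining, injective, with densely defined inverse
  (the domain of T^{-1} is R(T)).\<close>
definition quasi_sim_via :: "('a::complex_hilbert \<Rightarrow> 'b::complex_hilbert) \<Rightarrow> 'a set \<Rightarrow> ('a \<Rightarrow> 'a)
    \<Rightarrow> 'b set \<Rightarrow> ('b \<Rightarrow> 'b) \<Rightarrow> bool" where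
  "quasi_sim_via T DA fA DB fB \<longleftrightarrow> intertwining T DA fA DB fB \<and> inj T \<and> closure (range T) = UNIV"

definition resolvent_set :: "'a::complex_hilbert set \<Rightarrow> ('a \<Rightarrow> 'a) \<Rightarrow> complex set" where
  "resolvent_set D f = {l. inj_on (\<lambda>x. f x - scaleC l x) D
      \<and> (\<lambda>x. f x - scaleC l x) ` D = UNIV
      \<and> cbounded_linear (the_inv_into D (\<lambda>x. f x - scaleC l x))}"

definition point_spectrum :: "'a::complex_hilbert set \<Rightarrow> ('a \<Rightarrow> 'a) \<Rightarrow> complex set" where
  "point_spectrum D f = {l. \<exists>x\<in>D. x \<noteq> 0 \<and> f x = scaleC l x}"

definition continuous_spectrum :: "'a::complex_hilbert set \<Rightarrow> ('a \<Rightarrow> 'a) \<Rightarrow> complex set" where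
  "continuous_spectrum D f = {l. inj_on (\<lambda>x. f x - scaleC l x) D
      \<and> closure ((\<lambda>x. f x - scaleC l x) ` D) = UNIV
      \<and> (\<lambda>x. f x - scaleC l x) ` D \<noteq> UNIV}"

end

theory Submission imports Defs begin

(* Fix l in rho(A) that is not an eigenvalue of B, and write A_l = A - l, B_l = B - l.
   Then B_l is injective (l is not an eigenvalue) and B_l T = T A_l on D(A); since A_l maps
   D(A) onto the whole space, R(T) is contained in R(B_l), so R(B_l) is dense.  Either
   R(B_l) is a proper subspace, and l lies in the continuous spectrum of B, or B_l is onto.
   In the latter case R(B_l) is contained in R(T) (because D(B), R(B) lie in R(T)), so T is
   a bijection, hence has a bounded inverse, and the inverse of B_l is T (A_l)^-1 T^-1,
   which is bounded: l lies in the resolvent set of B. *)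

instance complex_hilbert \<subseteq> banach ..

(* Baire step of the open mapping theorem: if T is onto, the closure of the image of some
   ball has nonempty interior, since these closures cover the complete space. *)
lemma surj_image_ball_closure_interior:
  fixes T :: "'a::banach \<Rightarrow> 'b::banach"
  assumes "surj T"
  shows "\<exists>n::nat. interior (closure (T ` cball 0 (real n))) \<noteq> {}"
proof (rule ccontr)
  assume no_interior: "\<not> ?thesis"
  let ?G = "range (\<lambda>n::nat. closure (T ` cball 0 (real n)))"
  have "euclidean interior_of \<Union>?G = {}"
  proof (rule Baire_category_alt)
    show "completely_metrizable_space (euclidean::'b topology) \<or>
          locally_compact_space (euclidean::'b topology) \<and> regular_space (euclidean::'b topology)"
      using completely_metrizable_space_euclidean by blast
  qed (use no_interior in auto)
  moreover have "\<Union>?G = UNIV"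
  proof -
    have "y \<in> \<Union>?G" for y
    proof -
      obtain x where x: "y = T x" using assms by (metis surjD)
      obtain n :: nat where "norm x \<le> real n" using real_arch_simple by blast
      then have "y \<in> closure (T ` cball 0 (real n))"
        using x closure_subset by fastforce
      then show ?thesis by blast
    qed
    then show ?thesis by blast
  qed
  ultimately show False by simp
qed

(* Every vector has approximate preimages whose norm is controlled linearly: the
   quantitative form of the Baire step, obtained by translating and rescaling the ball. *)
lemma surj_approximate_preimage:
  fixes T :: "'a::banach \<Rightarrow> 'b::banach"
  assumes lin: "bounded_linear T" and "surj T"
  shows "\<exists>M>0. \<forall>y e. e > 0 \<longrightarrow> (\<exists>x. norm x \<le> M * norm y \<and> norm (y - T x) < e)"
proof -
  interpret T: bounded_linear T by (rule lin)
  obtain n :: nat and y0 where "y0 \<in> interior (closure (T ` cball 0 (real n)))"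
    using surj_image_ball_closure_interior[OF assms(2)] by blast
  then obtain r where r: "r > 0" "ball y0 r \<subseteq> closure (T ` cball 0 (real n))"
    using mem_interior by blast
  have approx_ball: "\<exists>x\<in>cball 0 (real n). dist (T x) y < e" if "y \<in> ball y0 r" "e > 0" for y e
    using that r closure_approachable[of y] by blast
  (* vectors of norm < r are differences of two points of the ball around y0 *)
  have small: "\<exists>x. norm x \<le> 2 * real n \<and> norm (z - T x) < e" if z: "norm z < r" and e: "e > 0" for z e
  proof -
    obtain x1 where x1: "x1 \<in> cball 0 (real n)" "dist (T x1) (y0 + z) < e/2"
      using approx_ball[of "y0 + z" "e/2"] z e by (auto simp: dist_norm)
    obtain x2 where x2: "x2 \<in> cball 0 (real n)" "dist (T x2) y0 < e/2"
      using approx_ball[of y0 "e/2"] r e by auto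
    have norm_x: "norm (x1 - x2) \<le> 2 * real n"
      using x1(1) x2(1) norm_triangle_ineq4[of x1 x2] by simp
    have "z - T (x1 - x2) = (y0 + z - T x1) + (T x2 - y0)"
      by (simp add: T.diff algebra_simps)
    then have "norm (z - T (x1 - x2)) \<le> norm (y0 + z - T x1) + norm (T x2 - y0)"
      by (metis norm_triangle_ineq)
    also have "\<dots> < e" using x1(2) x2(2) by (simp add: dist_norm norm_minus_commute)
    finally show ?thesis using norm_x by blast
  qed
  define M where "M = 4 * real n / r + 1"
  have M: "M > 0" using r unfolding M_def by (intro add_nonneg_pos divide_nonneg_pos) auto
  have "\<exists>x. norm x \<le> M * norm y \<and> norm (y - T x) < e" if e: "e > 0" for y e
  proof (cases "y = 0")
    case True then show ?thesis using e by (intro exI[of _ 0]) auto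
  next
    case False
    then have ny: "norm y > 0" by simp
    define c where "c = (r/2) / norm y"
    have c: "c > 0" using ny r by (simp add: c_def)
    have "norm (c *\<^sub>R y) < r" using ny r by (simp add: c_def)
    then obtain x where x: "norm x \<le> 2 * real n" "norm (c *\<^sub>R y - T x) < c * e"
      using small[of "c *\<^sub>R y" "c * e"] c e by auto
    have "norm ((1/c) *\<^sub>R x) \<le> 2 * real n / c" using x(1) c by (simp add: divide_right_mono)
    also have "\<dots> = 4 * real n / r * norm y" using ny r by (simp add: c_def field_simps)
    also have "\<dots> \<le> M * norm y" using ny by (simp add: M_def distrib_right)
    finally have bound: "norm ((1/c) *\<^sub>R x) \<le> M * norm y" .
    have "y - T ((1/c) *\<^sub>R x) = (1/c) *\<^sub>R (c *\<^sub>R y - T x)" using c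
      by (simp add: T.scaleR algebra_simps)
    then have "norm (y - T ((1/c) *\<^sub>R x)) = norm (c *\<^sub>R y - T x) / c" using c by simp
    also have "\<dots> < e" using x(2) c by (simp add: divide_less_eq mult.commute)
    finally show ?thesis using bound by blast
  qed
  then show ?thesis using M by blast
qed

(* Iterative correction: if every y has an approximate preimage g y with error at most
   half of y, then correcting the residuals repeatedly yields an exact preimage, the sum
   of a geometrically convergent series, of norm at most 2M times that of y. *)
lemma exact_preimage_from_halving:
  fixes T :: "'a::banach \<Rightarrow> 'b::banach"
  assumes lin: "bounded_linear T" and M: "M \<ge> 0"
    and g_norm: "\<And>y. norm (g y) \<le> M * norm y"
    and g_err: "\<And>y. norm (y - T (g y)) \<le> norm y / 2"
  shows "\<exists>x. T x = y \<and> norm x \<le> 2 * M * norm y"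
proof -
  interpret T: bounded_linear T by (rule lin)
  define ys where "ys k = ((\<lambda>y. y - T (g y)) ^^ k) y" for k
  define xs where "xs k = g (ys k)" for k
  have ys_Suc: "ys (Suc k) = ys k - T (xs k)" for k by (simp add: ys_def xs_def)
  have ys_bound: "norm (ys k) \<le> norm y * (1/2)^k" for k
  proof (induction k)
    case 0 then show ?case by (simp add: ys_def)
  next
    case (Suc k)
    have "norm (ys (Suc k)) \<le> norm (ys k) / 2" using g_err by (simp add: ys_Suc xs_def)
    also have "\<dots> \<le> norm y * (1/2)^k / 2" using Suc by simp
    finally show ?case by simp
  qed
  have xs_bound: "norm (xs k) \<le> M * norm y * (1/2)^k" for k
  proof -
    have "norm (xs k) \<le> M * norm (ys k)" by (simp add: xs_def g_norm)
    also have "\<dots> \<le> M * (norm y * (1/2)^k)" using M ys_bound by (rule mult_left_mono[rotated])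
    finally show ?thesis by (simp add: mult.assoc)
  qed
  have geo: "summable (\<lambda>k. M * norm y * (1/2::real)^k)"
    by (intro summable_mult summable_geometric) simp
  have sum_norm: "summable (\<lambda>k. norm (xs k))"
    by (rule summable_comparison_test[OF _ geo]) (use xs_bound in simp)
  have partial_sums: "(\<Sum>k<n. T (xs k)) = y - ys n" for n
    by (induction n) (simp_all add: ys_def[of 0] ys_Suc)
  have "ys \<longlonglongrightarrow> 0"
  proof (rule tendsto_norm_zero_cancel, rule Lim_null_comparison)
    show "\<forall>\<^sub>F k in sequentially. norm (norm (ys k)) \<le> norm y * (1/2)^k" using ys_bound by simp
    show "(\<lambda>k. norm y * (1/2::real)^k) \<longlonglongrightarrow> 0"
      by (intro tendsto_mult_right_zero LIMSEQ_power_zero) simp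
  qed
  then have "(\<lambda>n. y - ys n) \<longlonglongrightarrow> y - 0" by (intro tendsto_intros)
  then have "(\<lambda>n. T (\<Sum>k<n. xs k)) \<longlonglongrightarrow> y" by (simp add: T.sum partial_sums)
  moreover have "(\<lambda>n. T (\<Sum>k<n. xs k)) \<longlonglongrightarrow> T (suminf xs)"
    by (intro T.tendsto summable_LIMSEQ summable_norm_cancel[OF sum_norm])
  ultimately have exact: "T (suminf xs) = y" by (metis LIMSEQ_unique)
  have "norm (suminf xs) \<le> (\<Sum>k. norm (xs k))" by (rule summable_norm[OF sum_norm])
  also have "\<dots> \<le> (\<Sum>k. M * norm y * (1/2::real)^k)"
    by (rule suminf_le[OF _ sum_norm geo]) (use xs_bound in simp)
  also have "\<dots> = 2 * M * norm y"
    by (simp add: suminf_mult suminf_geometric summable_geometric)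
  finally show ?thesis using exact by blast
qed

lemma bounded_linear_inverse:
  fixes T :: "'a::banach \<Rightarrow> 'b::banach"
  assumes lin: "bounded_linear T" and bij: "bij T"
  shows "bounded_linear (inv T)"
proof -
  interpret T: bounded_linear T by (rule lin)
  have surj: "surj T" and inj: "inj T" using bij bij_is_surj bij_is_inj by auto
  have TS: "T (inv T y) = y" for y using surj by (simp add: surj_f_inv_f)
  have ST: "inv T (T x) = x" for x using inj by simp
  obtain M where M: "M > 0" "\<And>y e. e > 0 \<Longrightarrow> \<exists>x. norm x \<le> M * norm y \<and> norm (y - T x) < e"
    using surj_approximate_preimage[OF lin surj] by blast
  have "\<exists>x. norm x \<le> M * norm y \<and> norm (y - T x) \<le> norm y / 2" for y
  proof (cases "y = 0")
    case True then show ?thesis by (intro exI[of _ 0]) auto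
  next
    case False then show ?thesis using M(2)[of "norm y / 2" y] by (auto dest: less_imp_le)
  qed
  then obtain g where "\<And>y. norm (g y) \<le> M * norm y" "\<And>y. norm (y - T (g y)) \<le> norm y / 2"
    by metis
  then have bound: "norm (inv T y) \<le> norm y * (2 * M)" for y
    using exact_preimage_from_halving[OF lin less_imp_le[OF M(1)], of g y] ST
    by (metis mult.commute)
  show ?thesis
  proof (rule bounded_linear_intro[OF _ _ bound])
    show "inv T (x + y) = inv T x + inv T y" for x y by (metis ST T.add TS)
    show "inv T (r *\<^sub>R x) = r *\<^sub>R inv T x" for r x by (metis ST T.scaleR TS)
  qed
qed

lemma cbounded_linear_inverse:
  assumes T: "cbounded_linear T" and bij: "bij T"
  shows "cbounded_linear (inv T)"
proof -
  have TS: "T (inv T y) = y" for y using bij by (simp add: bij_is_surj surj_f_inv_f)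
  have ST: "inv T (T x) = x" for x using bij by (simp add: bij_is_inj)
  have "inv T (scaleC c x) = scaleC c (inv T x)" for c x
    using T ST TS unfolding cbounded_linear_def by metis
  then show ?thesis
    using T bij bounded_linear_inverse unfolding cbounded_linear_def by blast
qed

(* Elementary complex-linear algebra in the class complex_hilbert, needed because the
   domains of operators are only assumed closed under sums and complex multiples. *)
lemma scaleC_diff_right: "scaleC a (x - y::'a::complex_hilbert) = scaleC a x - scaleC a y"
proof -
  have "scaleC a (x - y) + scaleC a y = scaleC a x"
    by (metis scaleC_add_right diff_add_cancel)
  then show ?thesis by (simp add: eq_diff_eq)
qed

lemma uminus_eq_scaleC: "- (x::'a::complex_hilbert) = scaleC (-1) x"
  by (metis scaleR_scaleC scaleR_minus1_left of_real_1 of_real_minus)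

lemma csubspace_diff: "csubspace D \<Longrightarrow> x \<in> D \<Longrightarrow> y \<in> D \<Longrightarrow> x - y \<in> D"
  unfolding csubspace_def by (metis diff_conv_add_uminus uminus_eq_scaleC)

lemma lin_op_diff: "lin_op D f \<Longrightarrow> x \<in> D \<Longrightarrow> y \<in> D \<Longrightarrow> f (x - y) = f x - f y"
  unfolding lin_op_def csubspace_def by (metis diff_conv_add_uminus uminus_eq_scaleC)

abbreviation op_shift :: "('a::complex_hilbert \<Rightarrow> 'a) \<Rightarrow> complex \<Rightarrow> 'a \<Rightarrow> 'a" where
  "op_shift f l \<equiv> \<lambda>x. f x - scaleC l x"

lemma not_eigenvalue_shift_inj:
  assumes "lin_op D f" and "l \<notin> point_spectrum D f"
  shows "inj_on (op_shift f l) D"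
proof (rule inj_onI)
  fix x y assume xy: "x \<in> D" "y \<in> D" "f x - scaleC l x = f y - scaleC l y"
  have sub: "csubspace D" using assms(1) by (simp add: lin_op_def)
  have "f (x - y) = f x - f y" by (rule lin_op_diff[OF assms(1) xy(1,2)])
  also have "\<dots> = scaleC l (x - y)" using xy(3) by (simp add: scaleC_diff_right algebra_simps)
  finally have "x - y = 0"
    using assms(2) csubspace_diff[OF sub xy(1,2)] unfolding point_spectrum_def by blast
  then show "x = y" by simp
qed

lemma intertwining_shift:
  assumes "intertwining T DA A DB B" and "\<xi> \<in> DA"
  shows "op_shift B l (T \<xi>) = T (op_shift A l \<xi>)"
proof -
  have "bounded_linear T" "\<And>c x. T (scaleC c x) = scaleC c (T x)"
    using assms(1) unfolding intertwining_def cbounded_linear_def by auto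
  then show ?thesis
    using assms unfolding intertwining_def by (simp add: linear_simps)
qed

lemma intertwining_range_subset:
  assumes "intertwining T DA A DB B" and "op_shift A l ` DA = UNIV"
  shows "range T \<subseteq> op_shift B l ` DB"
proof
  fix y assume "y \<in> range T"
  then obtain z where z: "y = T z" by blast
  have "z \<in> op_shift A l ` DA" using assms(2) by simp
  then obtain \<xi> where \<xi>: "\<xi> \<in> DA" "z = op_shift A l \<xi>" by blast
  then have "y = op_shift B l (T \<xi>)" using z intertwining_shift[OF assms(1) \<xi>(1)] by simp
  moreover have "T \<xi> \<in> DB" using assms(1) \<xi>(1) by (auto simp: intertwining_def)
  ultimately show "y \<in> op_shift B l ` DB" by blast
qed

lemma shift_onto_forces_surj:
  assumes T: "cbounded_linear T"
    and dom: "DB \<subseteq> range T" and ran: "B ` DB \<subseteq> range T"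
    and onto: "op_shift B l ` DB = UNIV"
  shows "surj T"
proof -
  have "y \<in> range T" for y
  proof -
    have "y \<in> op_shift B l ` DB" using onto by simp
    then obtain x where x: "x \<in> DB" "y = B x - scaleC l x" by blast
    obtain a b where ab: "B x = T a" "x = T b" using x(1) dom ran by blast
    have "T (a - scaleC l b) = T a - scaleC l (T b)"
      using T unfolding cbounded_linear_def by (simp add: linear_simps)
    then have "y = T (a - scaleC l b)" using x(2) ab by simp
    then show ?thesis by blast
  qed
  then show ?thesis by blast
qed

(* Resolvent transfer: if T is moreover invertible with bounded inverse and B - l is
   injective and onto, then (B - l)^-1 = T (A - l)^-1 T^-1 is bounded. *)
lemma resolvent_transfer:
  assumes int: "intertwining T DA A DB B" and Tinv: "cbounded_linear (inv T)" and surjT: "surj T"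
    and lA: "l \<in> resolvent_set DA A"
    and injB: "inj_on (op_shift B l) DB" and ontoB: "op_shift B l ` DB = UNIV"
  shows "l \<in> resolvent_set DB B"
proof -
  define R where "R = the_inv_into DA (op_shift A l)"
  have injA: "inj_on (op_shift A l) DA" and ontoA: "op_shift A l ` DA = UNIV"
    and R: "cbounded_linear R"
    using lA unfolding resolvent_set_def R_def by auto
  have T: "cbounded_linear T" and TDA: "T ` DA \<subseteq> DB"
    using int unfolding intertwining_def by auto
  have "the_inv_into DB (op_shift B l) = (\<lambda>y. T (R (inv T y)))"
  proof
    fix y
    have in_range: "inv T y \<in> op_shift A l ` DA" using ontoA by simp
    have Ry: "R (inv T y) \<in> DA" "op_shift A l (R (inv T y)) = inv T y"
      unfolding R_def using the_inv_into_into[OF injA in_range] f_the_inv_into_f[OF injA in_range]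
      by simp_all
    then have "op_shift B l (T (R (inv T y))) = y"
      using intertwining_shift[OF int Ry(1)] surjT by (simp add: surj_f_inv_f)
    moreover have "T (R (inv T y)) \<in> DB" using TDA Ry(1) by blast
    ultimately show "the_inv_into DB (op_shift B l) y = T (R (inv T y))"
      using the_inv_into_f_f[OF injB, of "T (R (inv T y))"] by simp
  qed
  moreover have "cbounded_linear (\<lambda>y. T (R (inv T y)))"
    using T R Tinv bounded_linear_compose[of T "\<lambda>y. R (inv T y)"] bounded_linear_compose[of R "inv T"]
    unfolding cbounded_linear_def by simp
  ultimately show ?thesis
    using injB ontoB unfolding resolvent_set_def by simp
qed

theorem corollary3p13:
  fixes DA :: "'a::complex_hilbert set" and A :: "'a \<Rightarrow> 'a"
    and DB :: "'b::complex_hilbert set" and B :: "'b \<Rightarrow> 'b"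
    and T :: "'a \<Rightarrow> 'b"
  assumes "closed_op DA A" and "densely_defined DA"
    and "closed_op DB B" and "densely_defined DB"
    and "quasi_sim_via T DA A DB B"
    and "DB \<subseteq> range T"
    and "B ` DB \<subseteq> range T"
  shows "resolvent_set DA A - point_spectrum DB B
           \<subseteq> resolvent_set DB B \<union> continuous_spectrum DB B"
proof
  fix l assume l: "l \<in> resolvent_set DA A - point_spectrum DB B"
  have int: "intertwining T DA A DB B" and T: "cbounded_linear T" and injT: "inj T"
    and denseT: "closure (range T) = UNIV"
    using assms(5) unfolding quasi_sim_via_def intertwining_def by auto
  have "lin_op DB B" using assms(3) by (simp add: closed_op_def)
  then have injB: "inj_on (op_shift B l) DB"
    using l by (simp add: not_eigenvalue_shift_inj)
  have "op_shift A l ` DA = UNIV" using l by (simp add: resolvent_set_def)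
  then have "closure (range T) \<subseteq> closure (op_shift B l ` DB)"
    by (intro closure_mono intertwining_range_subset[OF int])
  then have dense: "closure (op_shift B l ` DB) = UNIV" using denseT by auto
  show "l \<in> resolvent_set DB B \<union> continuous_spectrum DB B"
  proof (cases "op_shift B l ` DB = UNIV")
    case False
    then show ?thesis using injB dense by (simp add: continuous_spectrum_def)
  next
    case True
    then have surjT: "surj T" by (rule shift_onto_forces_surj[OF T assms(6,7)])
    then have "cbounded_linear (inv T)" using T injT by (simp add: cbounded_linear_inverse bij_def)
    then have "l \<in> resolvent_set DB B"
      using l injB True by (intro resolvent_transfer[OF int _ surjT]) auto
    then show ?thesis by simp
  qed
qed

end
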